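(* Let $X$ be a real Banach space with a normalized Schauder basis $\mathcal B=(e_n)_{n=1}^\infty$ with biorthogonal functionals $(e_n^* )$, let $\mathcal E=(\varepsilon_n)_{n=1}^\infty$ be a sequence of nonnegative numbers, and let $K=K_{\mathcal B,\mathcal E}$. If $r^{\rm ext}(K)<\infty$, then $\|x\|\le r^{\rm ext}(K)$ for every $x\in K$.
   Context: The brick is $K_{\mathcal B,\mathcal E}=\{x\in X:\ |e_n^*(x)|\le\varepsilon_n \text{ for all } n\}$. A point $x_0\in A$ is an extreme point of $A$ if for every nonzero $x\in X$ there is $\lambda\in[-1,1]$ with $x_0+\lambda x\notin A$. The extreme radius $r^{\rm ext}(K)$ is the supremum of $\|x_0\|$ over extreme points $x_0$ of $K$ if an extreme point exists, and $\infty$ otherwise. *)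

theory Defs
  imports "HOL-Analysis.Analysis"
begin

text \<open>Schauder basis (indexed from 0): every vector has a unique norm-convergent expansion.\<close>
definition schauder_basis :: "(nat \<Rightarrow> 'a::banach) \<Rightarrow> bool" where
  "schauder_basis e \<longleftrightarrow> (\<forall>x. \<exists>!a::nat \<Rightarrow> real. (\<lambda>n. a n *\<^sub>R e n) sums x)"

definition normalized_schauder_basis :: "(nat \<Rightarrow> 'a::banach) \<Rightarrow> bool" where
  "normalized_schauder_basis e \<longleftrightarrow> schauder_basis e \<and> (\<forall>n. norm (e n) = 1)"

definition coord :: "(nat \<Rightarrow> 'a::banach) \<Rightarrow> nat \<Rightarrow> 'a \<Rightarrow> real" where
  "coord e n x = (THE a::nat \<Rightarrow> real. (\<lambda>k. a k *\<^sub>R e k) sums x) n"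

definition brick :: "(nat \<Rightarrow> 'a::banach) \<Rightarrow> (nat \<Rightarrow> real) \<Rightarrow> 'a set" where
  "brick e eps = {x. \<forall>n. \<bar>coord e n x\<bar> \<le> eps n}"

definition extreme_pt :: "'a::real_vector set \<Rightarrow> 'a \<Rightarrow> bool" where
  "extreme_pt A x0 \<longleftrightarrow> x0 \<in> A \<and>
     (\<forall>x. x \<noteq> 0 \<longrightarrow> (\<exists>l::real. -1 \<le> l \<and> l \<le> 1 \<and> x0 + l *\<^sub>R x \<notin> A))"

definition ext_radius :: "'a::real_normed_vector set \<Rightarrow> ereal" where
  "ext_radius A = (if \<exists>x. extreme_pt A x
                   then (SUP x\<in>{x. extreme_pt A x}. ereal (norm x)) else \<infinity>)"

end

theory Submission
  imports Defs
begin

text \<open>The extreme points of the brick are exactly its vertices, the points whose coordinates all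
  satisfy \<open>\<bar>e\<^sub>n\<^sup>*(z)\<bar> = \<epsilon>\<^sub>n\<close>. Changing a single coordinate of a vertex to
  \<open>\<pm>\<epsilon>\<^sub>k\<close> gives another vertex, so by convexity of the norm along a line, changing a
  single coordinate to any value in \<open>[-\<epsilon>\<^sub>k, \<epsilon>\<^sub>k]\<close> keeps the norm below the
  supremum \<open>R\<close> of the norms of the vertices. Iterating, a vertex whose first \<open>N\<close>
  coordinates are replaced by those of a point \<open>x\<close> of the brick has norm at most \<open>R\<close>;
  these points converge to \<open>x\<close> as \<open>N \<rightarrow> \<infinity>\<close>, whence \<open>\<parallel>x\<parallel> \<le> R\<close>.\<close>

lemma coord_eqI:
  assumes "schauder_basis e" and "(\<lambda>n. a n *\<^sub>R e n) sums x"
  shows "coord e n x = a n"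
proof -
  have "\<exists>!a::nat \<Rightarrow> real. (\<lambda>n. a n *\<^sub>R e n) sums x"
    using assms(1) unfolding schauder_basis_def by blast
  with assms(2) show ?thesis
    unfolding coord_def by (simp add: the1_equality)
qed

lemma sums_coord:
  assumes "schauder_basis e"
  shows "(\<lambda>n. coord e n x *\<^sub>R e n) sums x"
proof -
  have "\<exists>!a::nat \<Rightarrow> real. (\<lambda>n. a n *\<^sub>R e n) sums x"
    using assms unfolding schauder_basis_def by blast
  from theI'[OF this] show ?thesis
    unfolding coord_def .
qed

lemma coord_add_scaleR:
  assumes "schauder_basis e"
  shows "coord e n (x + l *\<^sub>R y) = coord e n x + l * coord e n y"
proof -
  have "(\<lambda>n. coord e n x *\<^sub>R e n + l *\<^sub>R (coord e n y *\<^sub>R e n)) sums (x + l *\<^sub>R y)"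
    by (intro sums_add sums_scaleR_right sums_coord assms)
  then have "(\<lambda>n. (coord e n x + l * coord e n y) *\<^sub>R e n) sums (x + l *\<^sub>R y)"
    by (simp add: scaleR_add_left)
  from coord_eqI[OF assms this] show ?thesis .
qed

lemma coord_basis:
  assumes "schauder_basis e"
  shows "coord e n (e k) = (if n = k then 1 else 0)"
proof -
  have "(\<lambda>n. (if n = k then 1 else 0) *\<^sub>R e n) = (\<lambda>n. if n = k then e n else 0)"
    by auto
  then have "(\<lambda>n. (if n = k then 1 else 0) *\<^sub>R e n) sums e k"
    using sums_single[of k e] by simp
  from coord_eqI[OF assms this] show ?thesis .
qed

lemma coord_add_scaleR_basis:
  assumes "schauder_basis e"
  shows "coord e n (x + a *\<^sub>R e k) = coord e n x + (if n = k then a else 0)"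
  by (simp add: coord_add_scaleR[OF assms] coord_basis[OF assms])

lemma schauder_basis_nonzero:
  assumes "schauder_basis e"
  shows "e n \<noteq> 0"
  using coord_basis[OF assms, of n n] coord_add_scaleR[OF assms, of n 0 1 0] by auto

lemma eq_0_if_coord_eq_0:
  assumes "schauder_basis e" and "\<And>n. coord e n y = 0"
  shows "y = 0"
  using sums_coord[OF assms(1), of y] sums_zero by (simp add: assms(2) sums_unique2)

lemma abs_add_diff_le_imp_eq_0: "\<bar>a + b\<bar> \<le> \<bar>a\<bar> \<Longrightarrow> \<bar>a - b\<bar> \<le> \<bar>a\<bar> \<Longrightarrow> (b::real) = 0"
  by arith

lemma extreme_pt_brick_if_vertex:
  assumes sb: "schauder_basis e" and vertex: "\<forall>n. \<bar>coord e n z\<bar> = eps n"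
  shows "extreme_pt (brick e eps) z"
  unfolding extreme_pt_def
proof (intro conjI allI impI)
  show "z \<in> brick e eps"
    using vertex unfolding brick_def by simp
  fix y :: 'a
  assume "y \<noteq> 0"
  show "\<exists>l::real. -1 \<le> l \<and> l \<le> 1 \<and> z + l *\<^sub>R y \<notin> brick e eps"
  proof (rule ccontr)
    assume "\<not> ?thesis"
    then have "\<bar>coord e n z + l * coord e n y\<bar> \<le> \<bar>coord e n z\<bar>" if "-1 \<le> l" "l \<le> 1" for l n
      using that vertex unfolding brick_def by (simp add: coord_add_scaleR[OF sb])
    from this[of 1] this[of "-1"] have "y = 0"
      by (intro eq_0_if_coord_eq_0[OF sb] abs_add_diff_le_imp_eq_0) auto
    with \<open>y \<noteq> 0\<close> show False ..
  qed
qed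

text \<open>A point with a slack coordinate \<open>n\<close> is the midpoint of two points of the brick on
  the line through it in direction \<open>e\<^sub>n\<close>.\<close>

lemma vertex_if_extreme_pt_brick:
  assumes sb: "schauder_basis e" and ext: "extreme_pt (brick e eps) z"
  shows "\<bar>coord e n z\<bar> = eps n"
proof (rule ccontr)
  have zK: "z \<in> brick e eps"
    using ext unfolding extreme_pt_def by blast
  assume "\<bar>coord e n z\<bar> \<noteq> eps n"
  moreover have "\<bar>coord e n z\<bar> \<le> eps n"
    using zK unfolding brick_def by blast
  ultimately have slack: "0 < eps n - \<bar>coord e n z\<bar>"
    by linarith
  define d where "d = eps n - \<bar>coord e n z\<bar>"
  have "d > 0"
    using slack unfolding d_def .
  then have "d *\<^sub>R e n \<noteq> 0"
    using schauder_basis_nonzero[OF sb] by simp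
  then obtain l :: real where l: "-1 \<le> l" "l \<le> 1" "z + l *\<^sub>R (d *\<^sub>R e n) \<notin> brick e eps"
    using ext unfolding extreme_pt_def by blast
  have "\<bar>coord e n z + l * d\<bar> \<le> eps n"
  proof -
    have "\<bar>l * d\<bar> \<le> d"
      using l(1,2) \<open>d > 0\<close> by (simp add: abs_mult mult_left_le_one_le)
    then show ?thesis
      using abs_triangle_ineq[of "coord e n z" "l * d"] unfolding d_def by linarith
  qed
  with zK have "z + (l * d) *\<^sub>R e n \<in> brick e eps"
    unfolding brick_def by (simp add: coord_add_scaleR_basis[OF sb])
  with l(3) show False
    by simp
qed

lemma extreme_pt_brick_iff:
  assumes "schauder_basis e"
  shows "extreme_pt (brick e eps) z \<longleftrightarrow> (\<forall>n. \<bar>coord e n z\<bar> = eps n)"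
  using extreme_pt_brick_if_vertex[OF assms] vertex_if_extreme_pt_brick[OF assms] by blast

lemma norm_add_scaleR_le_max:
  fixes w v :: "'a::real_normed_vector" and u a b :: real
  assumes "a \<le> u" "u \<le> b"
  shows "norm (w + u *\<^sub>R v) \<le> max (norm (w + a *\<^sub>R v)) (norm (w + b *\<^sub>R v))"
proof (rule convex_on_le_max[where f = "\<lambda>u. norm (w + u *\<^sub>R v)"])
  show "convex_on {a..b} (\<lambda>u. norm (w + u *\<^sub>R v))"
  proof (rule convex_onI)
    fix t x y :: real
    assume t: "0 < t" "t < 1"
    have "w + ((1 - t) *\<^sub>R x + t *\<^sub>R y) *\<^sub>R v = (1 - t) *\<^sub>R (w + x *\<^sub>R v) + t *\<^sub>R (w + y *\<^sub>R v)"
      by (simp add: algebra_simps)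
    also have "norm \<dots> \<le> (1 - t) * norm (w + x *\<^sub>R v) + t * norm (w + y *\<^sub>R v)"
      using t by (smt (verit) norm_scaleR norm_triangle_ineq abs_of_pos)
    finally show "norm (w + ((1 - t) *\<^sub>R x + t *\<^sub>R y) *\<^sub>R v)
        \<le> (1 - t) * norm (w + x *\<^sub>R v) + t * norm (w + y *\<^sub>R v)" .
  qed simp
qed (use assms in auto)

text \<open>The vector \<open>z + \<Sum>n\<in>F. (c\<^sub>n - e\<^sub>n\<^sup>*(z)) e\<^sub>n\<close> is the vertex \<open>z\<close> with its
  coordinates in \<open>F\<close> replaced by \<open>c\<close>.\<close>

lemma norm_vertex_replace_coords_le:
  assumes sb: "schauder_basis e" and "finite F"
    and c: "\<And>n. \<bar>c n\<bar> \<le> eps n"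
    and bound: "\<And>z. \<forall>n. \<bar>coord e n z\<bar> = eps n \<Longrightarrow> norm z \<le> R"
    and vertex: "\<forall>n. \<bar>coord e n z\<bar> = eps n"
  shows "norm (z + (\<Sum>n\<in>F. (c n - coord e n z) *\<^sub>R e n)) \<le> R"
  using \<open>finite F\<close> vertex
proof (induction F arbitrary: z rule: finite_induct)
  case empty
  then show ?case
    using bound by simp
next
  case (insert k F)
  define W where "W = z + (\<Sum>n\<in>F. (c n - coord e n z) *\<^sub>R e n)"
  have endpoint: "norm (W + u *\<^sub>R e k) \<le> R" if u: "\<bar>coord e k z + u\<bar> = eps k" for u
  proof -
    define z' where "z' = z + u *\<^sub>R e k"
    have coord_z': "coord e n z' = coord e n z + (if n = k then u else 0)" for n
      unfolding z'_def by (rule coord_add_scaleR_basis[OF sb])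
    have "(\<Sum>n\<in>F. (c n - coord e n z') *\<^sub>R e n) = (\<Sum>n\<in>F. (c n - coord e n z) *\<^sub>R e n)"
      using insert.hyps(2) coord_z' by (intro sum.cong) auto
    then have "W + u *\<^sub>R e k = z' + (\<Sum>n\<in>F. (c n - coord e n z') *\<^sub>R e n)"
      unfolding W_def z'_def by (simp add: algebra_simps)
    moreover have "\<forall>n. \<bar>coord e n z'\<bar> = eps n"
      using coord_z' insert.prems u by simp
    ultimately show ?thesis
      using insert.IH by simp
  qed
  have eps_k: "\<bar>coord e k z\<bar> = eps k" "\<bar>c k\<bar> \<le> eps k"
    using insert.prems c by auto
  have "norm (W + (c k - coord e k z) *\<^sub>R e k)
      \<le> max (norm (W + (- eps k - coord e k z) *\<^sub>R e k)) (norm (W + (eps k - coord e k z) *\<^sub>R e k))"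
    using eps_k(2) by (intro norm_add_scaleR_le_max) auto
  also have "\<dots> \<le> R"
    using endpoint[of "- eps k - coord e k z"] endpoint[of "eps k - coord e k z"] eps_k(1) by simp
  finally show ?case
    unfolding W_def using insert.hyps by (simp add: algebra_simps)
qed

lemma norm_le_if_extreme_pt_brick_bounded:
  assumes sb: "schauder_basis e"
    and ext: "extreme_pt (brick e eps) z"
    and bound: "\<And>z. extreme_pt (brick e eps) z \<Longrightarrow> norm z \<le> R"
    and x: "x \<in> brick e eps"
  shows "norm x \<le> R"
proof -
  define v where "v N = z + (\<Sum>n<N. (coord e n x - coord e n z) *\<^sub>R e n)" for N
  have "\<bar>coord e n x\<bar> \<le> eps n" for n
    using x unfolding brick_def by blast
  moreover have "norm y \<le> R" if "\<forall>n. \<bar>coord e n y\<bar> = eps n" for y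
    using bound that extreme_pt_brick_iff[OF sb] by blast
  moreover have "\<forall>n. \<bar>coord e n z\<bar> = eps n"
    using ext extreme_pt_brick_iff[OF sb] by blast
  ultimately have "norm (v N) \<le> R" for N
    unfolding v_def by (rule norm_vertex_replace_coords_le[OF sb finite_lessThan])
  moreover have "v \<longlonglongrightarrow> z - z + x"
  proof -
    have "v = (\<lambda>N. z - (\<Sum>n<N. coord e n z *\<^sub>R e n) + (\<Sum>n<N. coord e n x *\<^sub>R e n))"
      unfolding v_def by (simp add: scaleR_diff_left sum_subtractf algebra_simps)
    then show ?thesis
      using sums_coord[OF sb, of x] sums_coord[OF sb, of z] unfolding sums_def
      by (simp only:) (intro tendsto_add tendsto_diff tendsto_const)
  qed
  ultimately show ?thesis
    by (intro LIMSEQ_le_const2[OF tendsto_norm]) auto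
qed

theorem lemma3p3:
  fixes e :: "nat \<Rightarrow> 'a::banach" and eps :: "nat \<Rightarrow> real"
  assumes "normalized_schauder_basis e"
    and "\<forall>n. eps n \<ge> 0"
    and "ext_radius (brick e eps) < \<infinity>"
  shows "\<forall>x\<in>brick e eps. ereal (norm x) \<le> ext_radius (brick e eps)"
proof
  fix x assume x: "x \<in> brick e eps"
  let ?K = "brick e eps"
  have sb: "schauder_basis e"
    using assms(1) unfolding normalized_schauder_basis_def by blast
  obtain z where z: "extreme_pt ?K z"
    using assms(3) unfolding ext_radius_def by (auto split: if_splits)
  have upper: "ereal (norm y) \<le> ext_radius ?K" if "extreme_pt ?K y" for y
    using z that unfolding ext_radius_def by (auto intro!: SUP_upper)
  obtain R where R: "ext_radius ?K = ereal R"
    using assms(3) upper[OF z] by (cases "ext_radius ?K") auto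
  have "norm x \<le> R"
    using norm_le_if_extreme_pt_brick_bounded[OF sb z _ x] upper R by simp
  then show "ereal (norm x) \<le> ext_radius ?K"
    using R by simp
qed

end
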